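(* If a sequent $\Gamma\Rightarrow\Delta$ is provable in $\mathsf{Grz}_\infty$, then there is a cyclic proof of $\Gamma\Rightarrow\Delta$.
   Context: Formulas are built from $\bot$ and atomic propositions using $\to$ and $\Box$. A sequent is $\Gamma\Rightarrow\Delta$ with $\Gamma,\Delta$ finite multisets of formulas; $\Box\Pi$ denotes $\{\Box B: B\in\Pi\}$ as a multiset. The calculus $\mathsf{Grz}_\infty$ has initial sequents $\Gamma,p\Rightarrow p,\Delta$ ($p$ atomic) and $\Gamma,\bot\Rightarrow\Delta$ and rules: $(\to_L)$ from $\Gamma,B\Rightarrow\Delta$ and $\Gamma\Rightarrow A,\Delta$ infer $\Gamma,A\to B\Rightarrow\Delta$; $(\to_R)$ from $\Gamma,A\Rightarrow B,\Delta$ infer $\Gamma\Rightarrow A\to B,\Delta$; $(\mathsf{refl})$ from $\Gamma,B,\Box B\Rightarrow\Delta$ infer $\Gamma,\Box B\Rightarrow\Delta$; $(\Box)$ from left premise $\Gamma,\Box\Pi\Rightarrow A,\Delta$ and right premise $\Box\Pi\Rightarrow A$ infer $\Gamma,\Box\Pi\Rightarrow\Box A,\Delta$. An $\infty$-proof is a possibly infinite tree of sequents built according to these rules, with leaves labelled by initial sequents, in which every infinite branch passes through a right premise of $(\Box)$ infinitely often; a sequent is provable if it labels the root of an $\infty$-proof. A cyclic proof of $\Gamma\Rightarrow\Delta$ is a pair $(\kappa,d)$ where $\kappa$ is a finite tree of sequents constructed according to the rules of $\mathsf{Grz}_\infty$ with root labelled $\Gamma\Rightarrow\Delta$ (leaves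 need not be initial sequents), and $d$ is a function defined exactly on the leaves of $\kappa$ not labelled by initial sequents such that for each such leaf $a$: $d(a)$ lies on the path from the root of $\kappa$ to $a$; there is a right premise of the rule $(\Box)$ between $a$ and $d(a)$; and $a$ and $d(a)$ are labelled by the same sequent. *)

theory Defs
  imports Main "HOL-Library.Multiset"
begin

datatype 'a fm = Bot | At 'a | Imp "'a fm" "'a fm" | Box "'a fm"

type_synonym 'a sequent = "'a fm multiset \<times> 'a fm multiset"

inductive initial :: "'a sequent \<Rightarrow> bool" where
  ax_at: "initial (add_mset (At p) G, add_mset (At p) D)"
| ax_bot: "initial (add_mset Bot G, D)"

datatype rname = RImpL | RImpR | RRefl | RBox

text \<open>Rule instances: rule name, ordered list of premises, conclusion.
  For (Box) the premise with index 0 is the left premise and index 1 the right premise.\<close>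
inductive rule_inst :: "rname \<Rightarrow> 'a sequent list \<Rightarrow> 'a sequent \<Rightarrow> bool" where
  impL: "rule_inst RImpL [(add_mset B G, D), (G, add_mset A D)] (add_mset (Imp A B) G, D)"
| impR: "rule_inst RImpR [(add_mset A G, add_mset B D)] (G, add_mset (Imp A B) D)"
| refl: "rule_inst RRefl [(add_mset B (add_mset (Box B) G), D)] (add_mset (Box B) G, D)"
| box:  "rule_inst RBox [(G + image_mset Box P, add_mset A D), (image_mset Box P, {#A#})]
            (G + image_mset Box P, add_mset (Box A) D)"

text \<open>A (possibly infinite) tree of sequents is given by a set N of node addresses
  (lists of child indices, root = []), a labelling lab, and for each node the rule
  applied at it (None = leaf).  The children of an internal node n are n@[i] for
  i < number of premises, labelled by the premises in order.\<close>

definition local_ok ::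
  "nat list set \<Rightarrow> (nat list \<Rightarrow> 'a sequent) \<Rightarrow> (nat list \<Rightarrow> rname option) \<Rightarrow> nat list \<Rightarrow> bool" where
  "local_ok N lab rn n \<longleftrightarrow>
     (case rn n of
        None \<Rightarrow> (\<forall>i. n @ [i] \<notin> N)
      | Some r \<Rightarrow> (\<exists>ps. rule_inst r ps (lab n)
                       \<and> (\<forall>i. n @ [i] \<in> N \<longleftrightarrow> i < length ps)
                       \<and> (\<forall>i < length ps. lab (n @ [i]) = ps ! i)))"

definition derivation ::
  "nat list set \<Rightarrow> (nat list \<Rightarrow> 'a sequent) \<Rightarrow> (nat list \<Rightarrow> rname option) \<Rightarrow> bool" where
  "derivation N lab rn \<longleftrightarrow>
     [] \<in> N \<and> (\<forall>n i. n @ [i] \<in> N \<longrightarrow> n \<in> N) \<and> (\<forall>n \<in> N. local_ok N lab rn n)"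

definition right_box_premise :: "(nat list \<Rightarrow> rname option) \<Rightarrow> nat list \<Rightarrow> bool" where
  "right_box_premise rn m \<longleftrightarrow> (\<exists>n. m = n @ [1] \<and> rn n = Some RBox)"

definition infinite_branch :: "nat list set \<Rightarrow> (nat \<Rightarrow> nat list) \<Rightarrow> bool" where
  "infinite_branch N f \<longleftrightarrow> f 0 = [] \<and> (\<forall>k. f k \<in> N \<and> (\<exists>i. f (Suc k) = f k @ [i]))"

definition inf_proof ::
  "nat list set \<Rightarrow> (nat list \<Rightarrow> 'a sequent) \<Rightarrow> (nat list \<Rightarrow> rname option) \<Rightarrow> bool" where
  "inf_proof N lab rn \<longleftrightarrow>
     derivation N lab rn
     \<and> (\<forall>n \<in> N. rn n = None \<longrightarrow> initial (lab n))
     \<and> (\<forall>f. infinite_branch N f \<longrightarrow> (\<forall>m. \<exists>k > m. right_box_premise rn (f k)))"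

definition provable :: "'a sequent \<Rightarrow> bool" where
  "provable s \<longleftrightarrow> (\<exists>N lab rn. inf_proof N lab rn \<and> lab [] = s)"

text \<open>Cyclic proofs: a finite tree (leaves need not be initial) together with a
  back-link function d defined exactly on the non-initial leaves; d(a) is a node on the
  path from the root to a, some node c strictly below d(a) and at or above a is a right
  premise of (Box), and a and d(a) carry the same sequent.\<close>
definition cyclic_proof ::
  "nat list set \<Rightarrow> (nat list \<Rightarrow> 'a sequent) \<Rightarrow> (nat list \<Rightarrow> rname option)
     \<Rightarrow> (nat list \<Rightarrow> nat list option) \<Rightarrow> 'a sequent \<Rightarrow> bool" where
  "cyclic_proof N lab rn d s \<longleftrightarrow>
     finite N \<and> derivation N lab rn \<and> lab [] = s
     \<and> dom d = {a \<in> N. rn a = None \<and> \<not> initial (lab a)}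
     \<and> (\<forall>a b. d a = Some b \<longrightarrow>
           (\<exists>u. a = b @ u)
         \<and> (\<exists>u v. u \<noteq> [] \<and> a = b @ u @ v \<and> right_box_premise rn (b @ u))
         \<and> lab a = lab b)"

definition has_cyclic_proof :: "'a sequent \<Rightarrow> bool" where
  "has_cyclic_proof s \<longleftrightarrow> (\<exists>N lab rn d. cyclic_proof N lab rn d s)"

end

theory Submission
  imports Defs "HOL-Library.Sublist" "HOL-Library.Infinite_Set"
begin

(* An \<infinity>-proof whose right premises of (Box) carry only finitely many distinct sequents can be
  cut into a cyclic proof: by Koenig's lemma every infinite branch meets two right premises of
  (Box) with the same sequent, so cutting at the lower one of each such pair leaves a finite tree,
  and the cut leaves are linked back to the upper one.
  An arbitrary \<infinity>-proof is first brought into this form by building contraction of boxed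
  formulas into it: at each right premise Box \<Pi> \<Rightarrow> A the duplicates in Box \<Pi> are dropped,
  and the same spare boxed formulas are dropped from every antecedent above it, where they still
  occur at least once more. The result is again an \<infinity>-proof of the same root, and its right
  premises of (Box) are sequents over the finitely many subformulas of the root, with antecedent
  a set of boxed formulas and a single succedent formula. *)

lemma prefix_closed_mem:
  assumes "\<forall>n i. n @ [i] \<in> T \<longrightarrow> n \<in> T" and "prefix n m" and "m \<in> T"
  shows "n \<in> T"
proof -
  obtain u where "m = n @ u" using \<open>prefix n m\<close> by (auto simp: prefix_def)
  with \<open>m \<in> T\<close> show ?thesis
  proof (induction u arbitrary: m rule: rev_induct)
    case (snoc i u)
    then show ?case using assms(1) by (metis append_assoc)
  qed simp
qed

lemma strict_prefix_snoc: "strict_prefix m (n @ [i]) \<longleftrightarrow> prefix m n"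
  by (metis prefix_order.less_le prefix_order.order_trans prefix_snoc prefix_snocD strict_prefix_def)

lemma infinite_branch_strict_prefix:
  assumes "infinite_branch T f" and "a < b"
  shows "strict_prefix (f a) (f b)"
  using \<open>a < b\<close>
proof (induction b)
  case (Suc b)
  obtain i where "f (Suc b) = f b @ [i]" using assms(1) unfolding infinite_branch_def by blast
  then have "strict_prefix (f b) (f (Suc b))" by (simp add: strict_prefix_snoc)
  then show ?case using Suc by (metis less_Suc_eq prefix_order.less_trans)
qed simp

lemma koenig:
  assumes inf: "infinite T"
    and closed: "\<forall>n i. n @ [i] \<in> T \<longrightarrow> n \<in> T"
    and branching: "\<And>n. finite {i. n @ [i] \<in> T}"
  obtains f where "infinite_branch T f"
proof -
  define below where "below n = {m \<in> T. prefix n m}" for n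
  have below_split: "below n \<subseteq> insert n (\<Union>i\<in>{i. n @ [i] \<in> T}. below (n @ [i]))" for n
  proof
    fix m assume "m \<in> below n"
    then obtain u where m: "m \<in> T" "m = n @ u" by (auto simp: below_def prefix_def)
    show "m \<in> insert n (\<Union>i\<in>{i. n @ [i] \<in> T}. below (n @ [i]))"
    proof (cases u)
      case (Cons i u')
      then have "n @ [i] \<in> T" using prefix_closed_mem[OF closed, of "n @ [i]" m] m by simp
      then show ?thesis using m Cons by (auto simp: below_def)
    qed (use m in simp)
  qed
  have step: "\<exists>i. infinite (below (n @ [i]))" if "infinite (below n)" for n
    using that below_split finite_subset branching
    by (metis (no_types, lifting) finite_UN_I finite_insert)
  define next_node where "next_node n = n @ [SOME i. infinite (below (n @ [i]))]" for n
  define f where "f k = (next_node ^^ k) []" for k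
  have inf_f: "infinite (below (f k))" for k
  proof (induction k)
    case 0
    have "below [] = T" by (auto simp: below_def)
    then show ?case using inf by (simp add: f_def)
  next
    case (Suc k)
    then show ?case using someI_ex[OF step] by (simp add: f_def next_node_def)
  qed
  have "f k \<in> T" for k
  proof -
    obtain m where "m \<in> below (f k)" using inf_f[of k] by (metis finite.emptyI ex_in_conv)
    then show ?thesis using prefix_closed_mem[OF closed] by (auto simp: below_def)
  qed
  moreover have "f (Suc k) = f k @ [SOME i. infinite (below (f k @ [i]))]" for k
    by (simp add: f_def next_node_def)
  ultimately have "infinite_branch T f"
    unfolding infinite_branch_def by (auto simp: f_def)
  then show thesis by (rule that)
qed

lemma derivation_rule_at:
  assumes "derivation N lab rn" "n \<in> N" "rn n = Some r"
  obtains ps where "rule_inst r ps (lab n)" "\<And>i. n @ [i] \<in> N \<longleftrightarrow> i < length ps"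
    "\<And>i. i < length ps \<Longrightarrow> lab (n @ [i]) = ps ! i"
  using assms unfolding derivation_def local_ok_def by force

lemma derivation_parent: "derivation N lab rn \<Longrightarrow> n @ [i] \<in> N \<Longrightarrow> n \<in> N"
  unfolding derivation_def by blast

lemma derivation_leaf: "derivation N lab rn \<Longrightarrow> n \<in> N \<Longrightarrow> rn n = None \<Longrightarrow> n @ [i] \<notin> N"
  unfolding derivation_def local_ok_def by fastforce

lemma derivation_finite_children:
  assumes d: "derivation N lab rn"
  shows "finite {i. n @ [i] \<in> N}"
proof (cases "n \<in> N")
  case True
  show ?thesis
  proof (cases "rn n")
    case None
    then have "{i. n @ [i] \<in> N} = {}" using derivation_leaf[OF d True] by blast
    then show ?thesis by simp
  next
    case (Some r)
    obtain ps where "rule_inst r ps (lab n)" and "\<And>i. n @ [i] \<in> N \<longleftrightarrow> i < length ps"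
      and "\<And>i. i < length ps \<Longrightarrow> lab (n @ [i]) = ps ! i"
      using derivation_rule_at[OF d True Some] by blast
    then have "{i. n @ [i] \<in> N} = {..<length ps}" by auto
    then show ?thesis by simp
  qed
next
  case False
  then have "{i. n @ [i] \<in> N} = {}" using derivation_parent[OF d] by blast
  then show ?thesis by simp
qed

definition prune :: "nat list set \<Rightarrow> nat list set \<Rightarrow> nat list set" where
  "prune N C = {n \<in> N. \<forall>c\<in>C. \<not> strict_prefix c n}"

lemma derivation_prune:
  assumes d: "derivation N lab rn"
  shows "derivation (prune N C) lab (\<lambda>n. if n \<in> C then None else rn n)"
  unfolding derivation_def
proof (intro conjI allI impI ballI)
  show "[] \<in> prune N C" using d by (simp add: derivation_def prune_def)
  fix n i assume "n @ [i] \<in> prune N C"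
  then show "n \<in> prune N C"
    using d by (auto simp: derivation_def prune_def strict_prefix_snoc prefix_order.less_imp_le)
next
  fix n assume n: "n \<in> prune N C"
  show "local_ok (prune N C) lab (\<lambda>n. if n \<in> C then None else rn n) n"
  proof (cases "n \<in> C")
    case True
    then show ?thesis by (auto simp: local_ok_def prune_def strict_prefix_snoc)
  next
    case False
    have children: "n @ [i] \<in> prune N C \<longleftrightarrow> n @ [i] \<in> N" for i
      using n False by (auto simp: prune_def strict_prefix_snoc prefix_order.le_less)
    have "local_ok N lab rn n" using d n by (simp add: derivation_def prune_def)
    then show ?thesis using False unfolding local_ok_def children by simp
  qed
qed

section \<open>Cyclic proofs from finitely many right premises of (Box)\<close>

definition box_repeats ::
  "nat list set \<Rightarrow> (nat list \<Rightarrow> 'a sequent) \<Rightarrow> (nat list \<Rightarrow> rname option) \<Rightarrow> nat list set" where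
  "box_repeats N lab rn =
     {c \<in> N. right_box_premise rn c \<and> (\<exists>b. strict_prefix b c \<and> lab b = lab c)}"

lemma finite_prune_box_repeats:
  assumes ip: "inf_proof N lab rn"
    and fin: "finite (lab ` {c \<in> N. right_box_premise rn c})"
  shows "finite (prune N (box_repeats N lab rn))"
proof (rule ccontr)
  let ?C = "box_repeats N lab rn"
  let ?N = "prune N ?C"
  assume "infinite ?N"
  have d: "derivation N lab rn" using ip by (simp add: inf_proof_def)
  have d': "derivation ?N lab (\<lambda>n. if n \<in> ?C then None else rn n)"
    using derivation_prune[OF d] .
  obtain f where f: "infinite_branch ?N f"
  proof (rule koenig[OF \<open>infinite ?N\<close>])
    show "\<forall>n i. n @ [i] \<in> ?N \<longrightarrow> n \<in> ?N" using d' by (simp add: derivation_def)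
    show "finite {i. n @ [i] \<in> ?N}" for n using derivation_finite_children[OF d'] .
  qed
  then have "infinite_branch N f" by (auto simp: infinite_branch_def prune_def)
  then have "\<forall>m. \<exists>k>m. right_box_premise rn (f k)" using ip by (simp add: inf_proof_def)
  then have K: "infinite {k. right_box_premise rn (f k)}"
    by (simp add: infinite_nat_iff_unbounded)
  have "(\<lambda>k. lab (f k)) ` {k. right_box_premise rn (f k)} \<subseteq> lab ` {c \<in> N. right_box_premise rn c}"
    using f by (auto simp: infinite_branch_def prune_def)
  then have "\<not> inj_on (\<lambda>k. lab (f k)) {k. right_box_premise rn (f k)}"
    using K fin finite_imageD finite_subset by blast
  then obtain a b where ab: "a < b" "right_box_premise rn (f a)" "right_box_premise rn (f b)"
    "lab (f a) = lab (f b)"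
    unfolding inj_on_def by (metis mem_Collect_eq linorder_neq_iff)
  have "f b \<in> ?C"
    using ab f infinite_branch_strict_prefix[OF f ab(1)]
    by (auto simp: box_repeats_def infinite_branch_def prune_def)
  moreover have "f (Suc b) \<in> ?N" and "strict_prefix (f b) (f (Suc b))"
    using f infinite_branch_strict_prefix[OF f, of b "Suc b"] by (auto simp: infinite_branch_def)
  ultimately show False by (auto simp: prune_def)
qed

lemma has_cyclic_proof_if_finite_box_premise_labels:
  assumes ip: "inf_proof N lab rn"
    and fin: "finite (lab ` {c \<in> N. right_box_premise rn c})"
  shows "has_cyclic_proof (lab [])"
proof -
  let ?C = "box_repeats N lab rn"
  let ?N = "prune N ?C"
  let ?rn = "\<lambda>n. if n \<in> ?C then None else rn n"
  define d where "d a = (if a \<in> ?N \<and> a \<in> ?C \<and> \<not> initial (lab a)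
      then Some (SOME b. strict_prefix b a \<and> lab b = lab a) else None)" for a
  have der: "derivation N lab rn" using ip by (simp add: inf_proof_def)
  have "dom d = {a \<in> ?N. ?rn a = None \<and> \<not> initial (lab a)}"
  proof -
    have "initial (lab a)" if "a \<in> ?N" "rn a = None" for a
      using ip that by (auto simp: inf_proof_def prune_def)
    then show ?thesis by (auto simp: d_def dom_def split: if_splits)
  qed
  moreover have "(\<exists>u. a = b @ u) \<and> (\<exists>u v. u \<noteq> [] \<and> a = b @ u @ v \<and> right_box_premise ?rn (b @ u))
      \<and> lab a = lab b" if "d a = Some b" for a b
  proof -
    have a: "a \<in> ?N" "a \<in> ?C" and b: "b = (SOME b. strict_prefix b a \<and> lab b = lab a)"
      using that by (auto simp: d_def split: if_splits)
    then have "\<exists>b. strict_prefix b a \<and> lab b = lab a" by (simp add: box_repeats_def)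
    then have "strict_prefix b a \<and> lab b = lab a" unfolding b by (rule someI_ex)
    then have sb: "strict_prefix b a" "lab b = lab a" by auto
    obtain n where n: "a = n @ [1]" "rn n = Some RBox"
      using a by (auto simp: box_repeats_def right_box_premise_def)
    have "n \<notin> ?C" using a n by (auto simp: prune_def strict_prefix_snoc)
    then have "right_box_premise ?rn a" using n by (auto simp: right_box_premise_def)
    moreover obtain u where "u \<noteq> []" "a = b @ u"
      using sb(1) by (auto simp: strict_prefix_def prefix_def)
    ultimately show ?thesis using sb(2) by auto
  qed
  ultimately have "cyclic_proof ?N lab ?rn d (lab [])"
    using finite_prune_box_repeats[OF assms] derivation_prune[OF der]
    by (simp add: cyclic_proof_def)
  then show ?thesis unfolding has_cyclic_proof_def by blast
qed

section \<open>Removing spare boxed formulas\<close>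

definition spare_boxes :: "'a fm multiset \<Rightarrow> 'a fm multiset \<Rightarrow> bool" where
  "spare_boxes E \<Gamma> \<longleftrightarrow> set_mset E \<subseteq> range Box \<and> (\<forall>F\<in>#E. count E F < count \<Gamma> F)"

definition surplus :: "'a multiset \<Rightarrow> 'a multiset" where
  "surplus M = M - mset_set (set_mset M)"

lemma spare_boxes_subset_mset: "spare_boxes E \<Gamma> \<Longrightarrow> E \<subseteq># \<Gamma>"
  unfolding spare_boxes_def subseteq_mset_def
  by (meson count_gt_imp_in_mset linorder_le_less_linear order_less_imp_le)

lemma spare_boxes_set_mset_diff: "spare_boxes E \<Gamma> \<Longrightarrow> set_mset (\<Gamma> - E) = set_mset \<Gamma>"
  unfolding spare_boxes_def set_eq_iff in_diff_count
  by (metis count_greater_zero_iff count_gt_imp_in_mset not_in_iff)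

lemma spare_boxes_mono: "spare_boxes E \<Gamma> \<Longrightarrow> \<Gamma> \<subseteq># \<Gamma>' \<Longrightarrow> spare_boxes E \<Gamma>'"
  unfolding spare_boxes_def by (meson dual_order.strict_trans1 mset_subset_eq_count)

lemma spare_boxes_add_mset_subset_mset: "spare_boxes E (add_mset A \<Gamma>) \<Longrightarrow> E \<subseteq># \<Gamma>"
  unfolding spare_boxes_def subseteq_mset_def
  by (metis Suc_le_eq count_add_mset count_greater_zero_iff count_inI linorder_linear not_less_eq_eq)

lemma spare_boxes_add_mset_non_box:
  "spare_boxes E (add_mset A \<Gamma>) \<Longrightarrow> A \<notin> range Box \<Longrightarrow> spare_boxes E \<Gamma>"
  unfolding spare_boxes_def by (metis count_add_mset subset_iff)

lemma spare_boxes_surplus: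
  assumes "set_mset \<Gamma> \<subseteq> range Box"
  shows "spare_boxes (surplus \<Gamma>) \<Gamma>"
  unfolding spare_boxes_def surplus_def
proof (intro conjI ballI)
  show "set_mset (\<Gamma> - mset_set (set_mset \<Gamma>)) \<subseteq> range Box"
    using assms by (auto dest: in_diffD)
  fix F assume "F \<in># \<Gamma> - mset_set (set_mset \<Gamma>)"
  then have "F \<in># \<Gamma>" by (rule in_diffD)
  then show "count (\<Gamma> - mset_set (set_mset \<Gamma>)) F < count \<Gamma> F" by simp
qed

lemma diff_surplus: "M - surplus M = mset_set (set_mset M)"
  unfolding surplus_def by (simp add: mset_set_set_mset_msubset subset_mset.le_imp_diff_is_add)

lemma add_mset_diff_subset_mset: "E \<subseteq># \<Gamma> \<Longrightarrow> add_mset A \<Gamma> - E = add_mset A (\<Gamma> - E)"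
  by (metis add_mset_add_single subset_mset.diff_add_assoc2)

lemma initial_antecedent_mono:
  assumes "initial (\<Gamma>, \<Delta>)" and "set_mset \<Gamma> \<subseteq> set_mset \<Gamma>'"
  shows "initial (\<Gamma>', \<Delta>)"
  using assms(1)
proof cases
  case (ax_at p G D)
  then have "At p \<in># \<Gamma>'" using assms(2) by auto
  then show ?thesis using ax_at initial.ax_at by (metis insert_DiffM)
next
  case (ax_bot G)
  then have "Bot \<in># \<Gamma>'" using assms(2) by auto
  then show ?thesis using initial.ax_bot by (metis insert_DiffM)
qed

definition premise_excess :: "rname \<Rightarrow> 'a fm multiset \<Rightarrow> nat \<Rightarrow> 'a fm multiset \<Rightarrow> 'a fm multiset" where
  "premise_excess r E i \<Pi> = (if r = RBox \<and> i = 1 then surplus \<Pi> else E)"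

definition thin_premise :: "rname \<Rightarrow> 'a fm multiset \<Rightarrow> nat \<Rightarrow> 'a sequent \<Rightarrow> 'a sequent" where
  "thin_premise r E i p = (fst p - premise_excess r E i (fst p), snd p)"

lemma spare_boxes_premise_excess:
  assumes "rule_inst r ps s" and "spare_boxes E (fst s)" and "i < length ps"
  shows "spare_boxes (premise_excess r E i (fst (ps ! i))) (fst (ps ! i))"
  using assms(1)
proof cases
  case (impL B G D A)
  then have "spare_boxes E G" using assms(2) spare_boxes_add_mset_non_box by fastforce
  then show ?thesis
    using impL assms(3) by (auto simp: premise_excess_def less_Suc_eq intro: spare_boxes_mono)
next
  case (impR A G B D)
  then show ?thesis
    using assms(2,3) by (auto simp: premise_excess_def intro: spare_boxes_mono)
next
  case (refl B G D)
  then show ?thesis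
    using assms(2,3) by (auto simp: premise_excess_def intro: spare_boxes_mono)
next
  case (box G P A D)
  have "spare_boxes (surplus (image_mset Box P)) (image_mset Box P)"
    by (rule spare_boxes_surplus) auto
  then show ?thesis
    using box assms(2,3) by (auto simp: premise_excess_def less_Suc_eq)
qed

lemma rule_inst_box_diff_spare_boxes:
  assumes "spare_boxes E (G + image_mset Box P)"
  shows "rule_inst RBox [(G + image_mset Box P - E, add_mset A D),
      (mset_set (set_mset (image_mset Box P)), {#A#})] (G + image_mset Box P - E, add_mset (Box A) D)"
proof -
  let ?\<Gamma> = "G + image_mset Box P - E"
  define X where "X = mset_set (set_mset P)"
  have X: "image_mset Box X = mset_set (set_mset (image_mset Box P))"
    unfolding X_def by (simp add: image_mset_mset_set inj_on_def)
  have "image_mset Box X \<subseteq># mset_set (set_mset ?\<Gamma>)"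
    using spare_boxes_set_mset_diff[OF assms] by (simp add: X subset_imp_msubset_mset_set)
  then have "image_mset Box X \<subseteq># ?\<Gamma>"
    using mset_set_set_mset_msubset subset_mset.order_trans by blast
  then have \<Gamma>: "?\<Gamma> - image_mset Box X + image_mset Box X = ?\<Gamma>"
    by (rule subset_mset.diff_add)
  show ?thesis
    using rule_inst.box[of "?\<Gamma> - image_mset Box X" X A D] unfolding \<Gamma> unfolding X .
qed

lemma rule_inst_diff_spare_boxes:
  assumes "rule_inst r ps s" and "spare_boxes E (fst s)"
  shows "rule_inst r (map (\<lambda>i. thin_premise r E i (ps ! i)) [0..<length ps]) (fst s - E, snd s)"
  using assms(1)
proof cases
  case (impL B G D A)
  then have "E \<subseteq># G"
    using assms(2) spare_boxes_add_mset_non_box spare_boxes_subset_mset by fastforce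
  then show ?thesis
    using impL rule_inst.impL[of B "G - E" D A]
    by (simp add: thin_premise_def premise_excess_def add_mset_diff_subset_mset upt_rec)
next
  case (impR A G B D)
  then show ?thesis
    using spare_boxes_subset_mset[OF assms(2)] rule_inst.impR[of A "G - E" B D]
    by (simp add: thin_premise_def premise_excess_def add_mset_diff_subset_mset)
next
  case (refl B G D)
  then have "spare_boxes E (add_mset (Box B) G)" using assms(2) by simp
  then have "E \<subseteq># G" "E \<subseteq># add_mset (Box B) G"
    by (rule spare_boxes_add_mset_subset_mset, rule spare_boxes_subset_mset)
  then show ?thesis
    using refl rule_inst.refl[of B "G - E" D]
    by (simp add: thin_premise_def premise_excess_def add_mset_diff_subset_mset)
next
  case (box G P A D)
  then show ?thesis
    using rule_inst_box_diff_spare_boxes[of E G P A D] assms(2)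
    by (simp add: thin_premise_def premise_excess_def diff_surplus upt_rec)
qed

section \<open>Thinning an \<infinity>-proof\<close>

fun excess_rev :: "(nat list \<Rightarrow> 'a sequent) \<Rightarrow> (nat list \<Rightarrow> rname option) \<Rightarrow> nat list \<Rightarrow> 'a fm multiset" where
  "excess_rev lab rn [] = {#}"
| "excess_rev lab rn (i # n) =
     (if rn (rev n) = Some RBox \<and> i = 1 then surplus (fst (lab (rev n @ [i])))
      else excess_rev lab rn n)"

definition excess :: "(nat list \<Rightarrow> 'a sequent) \<Rightarrow> (nat list \<Rightarrow> rname option) \<Rightarrow> nat list \<Rightarrow> 'a fm multiset" where
  "excess lab rn n = excess_rev lab rn (rev n)"

lemma excess_Nil [simp]: "excess lab rn [] = {#}"
  by (simp add: excess_def)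

lemma excess_snoc:
  "rn n = Some r \<Longrightarrow> excess lab rn (n @ [i]) = premise_excess r (excess lab rn n) i (fst (lab (n @ [i])))"
  by (simp add: excess_def premise_excess_def)

definition thin :: "(nat list \<Rightarrow> 'a sequent) \<Rightarrow> (nat list \<Rightarrow> rname option) \<Rightarrow> nat list \<Rightarrow> 'a sequent" where
  "thin lab rn n = (fst (lab n) - excess lab rn n, snd (lab n))"

lemma thin_snoc:
  "rn n = Some r \<Longrightarrow> thin lab rn (n @ [i]) = thin_premise r (excess lab rn n) i (lab (n @ [i]))"
  by (simp add: thin_def thin_premise_def excess_snoc)

lemma spare_boxes_excess:
  assumes d: "derivation N lab rn"
  shows "n \<in> N \<Longrightarrow> spare_boxes (excess lab rn n) (fst (lab n))"
proof (induction n rule: rev_induct)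
  case Nil
  then show ?case by (simp add: spare_boxes_def)
next
  case (snoc i n)
  then have n: "n \<in> N" using derivation_parent[OF d] by blast
  show ?case
  proof (cases "rn n")
    case None
    then show ?thesis using derivation_leaf[OF d n] snoc.prems by blast
  next
    case (Some r)
    obtain ps where ps: "rule_inst r ps (lab n)" "\<And>i. n @ [i] \<in> N \<longleftrightarrow> i < length ps"
      "\<And>i. i < length ps \<Longrightarrow> lab (n @ [i]) = ps ! i"
      using derivation_rule_at[OF d n Some] by blast
    have i: "i < length ps" using ps(2) snoc.prems by blast
    show ?thesis
      using spare_boxes_premise_excess[OF ps(1) snoc.IH[OF n] i]
      unfolding excess_snoc[of rn n r lab i, OF Some] ps(3)[OF i] .
  qed
qed

lemma inf_proof_thin:
  assumes ip: "inf_proof N lab rn"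
  shows "inf_proof N (thin lab rn) rn"
proof -
  have d: "derivation N lab rn" using ip by (simp add: inf_proof_def)
  have "local_ok N (thin lab rn) rn n" if n: "n \<in> N" for n
  proof (cases "rn n")
    case None
    then show ?thesis using derivation_leaf[OF d n] by (simp add: local_ok_def)
  next
    case (Some r)
    obtain ps where ps: "rule_inst r ps (lab n)" "\<And>i. n @ [i] \<in> N \<longleftrightarrow> i < length ps"
      "\<And>i. i < length ps \<Longrightarrow> lab (n @ [i]) = ps ! i"
      using derivation_rule_at[OF d n Some] by blast
    let ?ps = "map (\<lambda>i. thin_premise r (excess lab rn n) i (ps ! i)) [0..<length ps]"
    have "rule_inst r ?ps (thin lab rn n)"
      using rule_inst_diff_spare_boxes[OF ps(1) spare_boxes_excess[OF d n]] by (simp add: thin_def)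
    moreover have "thin lab rn (n @ [i]) = ?ps ! i" if "i < length ?ps" for i
      using that ps(3) thin_snoc[of rn n r lab i, OF Some] by simp
    ultimately show ?thesis
      using ps(2) Some unfolding local_ok_def by auto
  qed
  moreover have "initial (thin lab rn n)" if "n \<in> N" "rn n = None" for n
  proof -
    have "initial (lab n)" using ip that by (simp add: inf_proof_def)
    then show ?thesis
      using initial_antecedent_mono[of "fst (lab n)" "snd (lab n)"]
        spare_boxes_set_mset_diff[OF spare_boxes_excess[OF d \<open>n \<in> N\<close>]]
      by (simp add: thin_def)
  qed
  ultimately show ?thesis using ip by (simp add: inf_proof_def derivation_def)
qed

fun subfms :: "'a fm \<Rightarrow> 'a fm set" where
  "subfms Bot = {Bot}"
| "subfms (At p) = {At p}"
| "subfms (Imp A B) = insert (Imp A B) (subfms A \<union> subfms B)"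
| "subfms (Box A) = insert (Box A) (subfms A)"

lemma subfms_refl: "A \<in> subfms A"
  by (cases A) auto

lemma subfms_trans: "B \<in> subfms A \<Longrightarrow> subfms B \<subseteq> subfms A"
  by (induction A) auto

lemma finite_subfms: "finite (subfms A)"
  by (induction A) auto

definition fms :: "'a sequent \<Rightarrow> 'a fm set" where
  "fms s = set_mset (fst s) \<union> set_mset (snd s)"

lemma rule_inst_premise_fms:
  "rule_inst r ps s \<Longrightarrow> p \<in> set ps \<Longrightarrow> fms p \<subseteq> (\<Union>A\<in>fms s. subfms A)"
  by (induction rule: rule_inst.induct) (use subfms_refl in \<open>fastforce simp: fms_def\<close>)+

lemma derivation_fms:
  assumes d: "derivation N lab rn"
  shows "n \<in> N \<Longrightarrow> fms (lab n) \<subseteq> (\<Union>A\<in>fms (lab []). subfms A)"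
proof (induction n rule: rev_induct)
  case Nil
  then show ?case using subfms_refl by blast
next
  case (snoc i n)
  then have n: "n \<in> N" using derivation_parent[OF d] by blast
  show ?case
  proof (cases "rn n")
    case None
    then show ?thesis using derivation_leaf[OF d n] snoc.prems by blast
  next
    case (Some r)
    obtain ps where ps: "rule_inst r ps (lab n)" "\<And>i. n @ [i] \<in> N \<longleftrightarrow> i < length ps"
      "\<And>i. i < length ps \<Longrightarrow> lab (n @ [i]) = ps ! i"
      using derivation_rule_at[OF d n Some] by blast
    have i: "i < length ps" using ps(2) snoc.prems by blast
    have "fms (lab (n @ [i])) \<subseteq> (\<Union>A\<in>fms (lab n). subfms A)"
      using rule_inst_premise_fms[OF ps(1) nth_mem[OF i]] unfolding ps(3)[OF i] .
    also have "\<dots> \<subseteq> (\<Union>A\<in>fms (lab []). subfms A)"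
    proof (rule UN_least)
      fix A assume "A \<in> fms (lab n)"
      then obtain B where "B \<in> fms (lab [])" "A \<in> subfms B" using snoc.IH[OF n] by blast
      then show "subfms A \<subseteq> (\<Union>B\<in>fms (lab []). subfms B)" using subfms_trans by blast
    qed
    finally show ?thesis .
  qed
qed

lemma right_box_premise_shape:
  assumes d: "derivation N lab rn" and "c \<in> N" and "right_box_premise rn c"
  obtains P A where "lab c = (image_mset Box P, {#A#})"
    and "thin lab rn c = (mset_set (set_mset (image_mset Box P)), {#A#})"
proof -
  obtain n where c: "c = n @ [1]" and n: "rn n = Some RBox"
    using assms(3) by (auto simp: right_box_premise_def)
  have "n \<in> N" using derivation_parent[OF d] \<open>c \<in> N\<close> c by blast
  then obtain ps where ps: "rule_inst RBox ps (lab n)" "\<And>i. n @ [i] \<in> N \<longleftrightarrow> i < length ps"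
    "\<And>i. i < length ps \<Longrightarrow> lab (n @ [i]) = ps ! i"
    using derivation_rule_at[OF d _ n] by blast
  from ps(1) obtain P A where "lab c = (image_mset Box P, {#A#})"
    by cases (use ps(3) c in auto)
  moreover from this have "thin lab rn c = (mset_set (set_mset (image_mset Box P)), {#A#})"
    using thin_snoc[of rn n RBox lab 1, OF n] c by (simp add: thin_premise_def premise_excess_def diff_surplus)
  ultimately show thesis by (rule that)
qed

lemma finite_thin_right_box_premise_labels:
  assumes ip: "inf_proof N lab rn"
  shows "finite (thin lab rn ` {c \<in> N. right_box_premise rn c})"
proof -
  have d: "derivation N lab rn" using ip by (simp add: inf_proof_def)
  let ?S = "\<Union>A\<in>fms (lab []). subfms A"
  have "finite ?S" by (simp add: fms_def finite_subfms)
  have "thin lab rn ` {c \<in> N. right_box_premise rn c}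
      \<subseteq> (\<lambda>(X, A). (mset_set X, {#A#})) ` (Pow ?S \<times> ?S)"
  proof (rule image_subsetI)
    fix c assume "c \<in> {c \<in> N. right_box_premise rn c}"
    then have c: "c \<in> N" "right_box_premise rn c" by simp_all
    obtain P A where lab: "lab c = (image_mset Box P, {#A#})"
      and thin: "thin lab rn c = (mset_set (set_mset (image_mset Box P)), {#A#})"
      by (rule right_box_premise_shape[OF d c])
    have "set_mset (image_mset Box P) \<in> Pow ?S" "A \<in> ?S"
      using derivation_fms[OF d c(1)] lab by (auto simp: fms_def)
    then show "thin lab rn c \<in> (\<lambda>(X, A). (mset_set X, {#A#})) ` (Pow ?S \<times> ?S)"
      unfolding thin by force
  qed
  moreover have "finite ((\<lambda>(X, A). (mset_set X, {#A#})) ` (Pow ?S \<times> ?S))"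
    using \<open>finite ?S\<close> by simp
  ultimately show ?thesis by (rule finite_subset)
qed

theorem theorem8p5:
  fixes \<Gamma> \<Delta> :: "'a fm multiset"
  assumes "provable (\<Gamma>, \<Delta>)"
  shows "has_cyclic_proof (\<Gamma>, \<Delta>)"
proof -
  obtain N lab rn where ip: "inf_proof N lab rn" and root: "lab [] = (\<Gamma>, \<Delta>)"
    using assms by (auto simp: provable_def)
  have "has_cyclic_proof (thin lab rn [])"
    using has_cyclic_proof_if_finite_box_premise_labels[OF inf_proof_thin[OF ip]]
      finite_thin_right_box_premise_labels[OF ip] .
  then show ?thesis using root by (simp add: thin_def)
qed

end
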